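(* Let $M>0$, $\Delta>0$, $\theta\ge0$, and let $P\in\mathcal P(\Delta,\theta,M)$ with $u=dP/dP_0-1$. Define $\eta^2_\varrho(P,P_0)=\sum_{k\ge1}\frac{\lambda_k}{\lambda_k+\varrho^2}\big[\mathbb E_P\varphi_k(X)\big]^2$. (a) If $\theta=0$ and $0<\varrho\le\sqrt{\Delta/(2M^2)}$, then $\eta^2_\varrho(P,P_0)\ge\frac12\|u\|^2_{L_2(P_0)}\ge\frac12\Delta$. (b) If $\theta>0$ and $0<\varrho\le\frac{1}{2\sqrt2}(2M)^{-\theta}\Delta^{\frac{1+\theta}{2}}$, then $\eta^2_\varrho(P,P_0)\ge\frac14\|u\|^2_{L_2(P_0)}\ge\frac14\Delta$.
   Context: $P_0$ is a probability measure on $(\mathcal X,\mathcal B)$ and $K$ a kernel with Mercer decomposition $K(x,x')=\sum_{k\ge1}\lambda_k\varphi_k(x)\varphi_k(x')$, $\lambda_1>\lambda_2>\cdots>0$, where $\{\varphi_k\}$ is an orthonormal basis of the $P_0$-mean-zero functions in $L_2(P_0)$. $\mathcal H(K)$ is the RKHS of $K$ with $\|f\|_K^2=\sum_k\lambda_k^{-1}\langle f,\varphi_k\rangle_{L_2(P_0)}^2$. $\mathcal F(\theta;M)$ ($\theta>0$) is the set of $f\in L_2(P_0)$ such that for every $R>0$ there is $f_R\in\mathcal H(K)$ with $\|f_R\|_K\le R$ and $\|f-f_R\|_{L_2(P_0)}\le MR^{-1/\theta}$; $\mathcal F(0;M)=\{f\in\mathcal H(K):\|f\|_K\le M\}$.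 $\mathcal P(\Delta,\theta,M)$ is the set of probability measures $P\ll P_0$ with $u=dP/dP_0-1\in\mathcal F(\theta;M)$ and $\|u\|^2_{L_2(P_0)}\ge\Delta$. Note $\mathbb E_P\varphi_k(X)=\langle u,\varphi_k\rangle_{L_2(P_0)}$. *)

theory Defs
  imports "HOL-Probability.Probability"
begin

definition sq_int :: "'a measure \<Rightarrow> ('a \<Rightarrow> real) \<Rightarrow> bool" where
  "sq_int M f \<longleftrightarrow> f \<in> borel_measurable M \<and> integrable M (\<lambda>x. (f x)\<^sup>2)"

definition L2_inner :: "'a measure \<Rightarrow> ('a \<Rightarrow> real) \<Rightarrow> ('a \<Rightarrow> real) \<Rightarrow> real" where
  "L2_inner M f g = (\<integral>x. f x * g x \<partial>M)"

definition L2_norm :: "'a measure \<Rightarrow> ('a \<Rightarrow> real) \<Rightarrow> real" where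
  "L2_norm M f = sqrt (\<integral>x. (f x)\<^sup>2 \<partial>M)"

definition mean_zero_ONB :: "'a measure \<Rightarrow> (nat \<Rightarrow> 'a \<Rightarrow> real) \<Rightarrow> bool" where
  "mean_zero_ONB M phi \<longleftrightarrow>
     (\<forall>k. sq_int M (phi k) \<and> (\<integral>x. phi k x \<partial>M) = 0) \<and>
     (\<forall>j k. L2_inner M (phi j) (phi k) = (if j = k then 1 else 0)) \<and>
     (\<forall>f. sq_int M f \<and> (\<integral>x. f x \<partial>M) = 0 \<and> (\<forall>k. L2_inner M f (phi k) = 0)
          \<longrightarrow> (AE x in M. f x = 0))"

text \<open>Membership in the RKHS H(K) and its norm, via the Mercer expansion.\<close>
definition in_RKHS :: "'a measure \<Rightarrow> (nat \<Rightarrow> 'a \<Rightarrow> real) \<Rightarrow> (nat \<Rightarrow> real) \<Rightarrow> ('a \<Rightarrow> real) \<Rightarrow> bool" where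
  "in_RKHS M phi lam f \<longleftrightarrow> sq_int M f \<and> (\<integral>x. f x \<partial>M) = 0 \<and>
     summable (\<lambda>k. (L2_inner M f (phi k))\<^sup>2 / lam k)"

definition RKHS_norm :: "'a measure \<Rightarrow> (nat \<Rightarrow> 'a \<Rightarrow> real) \<Rightarrow> (nat \<Rightarrow> real) \<Rightarrow> ('a \<Rightarrow> real) \<Rightarrow> real" where
  "RKHS_norm M phi lam f = sqrt (\<Sum>k. (L2_inner M f (phi k))\<^sup>2 / lam k)"

definition F_class :: "'a measure \<Rightarrow> (nat \<Rightarrow> 'a \<Rightarrow> real) \<Rightarrow> (nat \<Rightarrow> real) \<Rightarrow> real \<Rightarrow> real \<Rightarrow> ('a \<Rightarrow> real) \<Rightarrow> bool" where
  "F_class M phi lam \<theta> Mc f \<longleftrightarrow>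
     (if \<theta> = 0 then in_RKHS M phi lam f \<and> RKHS_norm M phi lam f \<le> Mc
      else sq_int M f \<and>
        (\<forall>R>0. \<exists>g. in_RKHS M phi lam g \<and> RKHS_norm M phi lam g \<le> R \<and>
                   L2_norm M (\<lambda>x. f x - g x) \<le> Mc * R powr (-1 / \<theta>)))"

definition dens_dev :: "'a measure \<Rightarrow> 'a measure \<Rightarrow> 'a \<Rightarrow> real" where
  "dens_dev P0 P x = enn2real (RN_deriv P0 P x) - 1"

definition P_class :: "'a measure \<Rightarrow> (nat \<Rightarrow> 'a \<Rightarrow> real) \<Rightarrow> (nat \<Rightarrow> real) \<Rightarrow> real \<Rightarrow> real \<Rightarrow> real \<Rightarrow> 'a measure \<Rightarrow> bool" where
  "P_class P0 phi lam \<Delta> \<theta> Mc P \<longleftrightarrow>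
     prob_space P \<and> sets P = sets P0 \<and> absolutely_continuous P0 P \<and>
     F_class P0 phi lam \<theta> Mc (dens_dev P0 P) \<and> (L2_norm P0 (dens_dev P0 P))\<^sup>2 \<ge> \<Delta>"

definition eta_sq :: "(nat \<Rightarrow> 'a \<Rightarrow> real) \<Rightarrow> (nat \<Rightarrow> real) \<Rightarrow> real \<Rightarrow> 'a measure \<Rightarrow> real" where
  "eta_sq phi lam \<rho> P = (\<Sum>k. lam k / (lam k + \<rho>\<^sup>2) * (\<integral>x. phi k x \<partial>P)\<^sup>2)"

end

theory Submission
  imports Defs
begin

text \<open>Write \<open>c_k = \<langle>u, \<phi>_k\<rangle> = E_P \<phi>_k(X)\<close>. Since \<open>u\<close> has mean zero and the \<open>\<phi>_k\<close> are complete
  among the mean-zero functions, Parseval's identity \<open>\<parallel>u\<parallel>\<^sup>2 = \<Sum> c_k\<^sup>2\<close> holds (completeness of L2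
  enters through Riesz--Fischer), so \<open>\<eta>\<^sup>2 = \<parallel>u\<parallel>\<^sup>2 - L\<close> with the shrinkage loss
  \<open>L = \<Sum> \<rho>\<^sup>2 / (\<lambda>_k + \<rho>\<^sup>2) c_k\<^sup>2\<close>. If \<open>\<theta> = 0\<close>, then \<open>L \<le> \<rho>\<^sup>2 \<parallel>u\<parallel>_K\<^sup>2 \<le> \<rho>\<^sup>2 M\<^sup>2 \<le> \<Delta>/2\<close>.
  If \<open>\<theta> > 0\<close>, approximate \<open>u\<close> by \<open>h\<close> with \<open>\<parallel>h\<parallel>_K \<le> R\<close> and \<open>\<parallel>u - h\<parallel> \<le> M R^(-1/\<theta>)\<close>; then
  \<open>L \<le> 2\<rho>\<^sup>2R\<^sup>2 + 2\<parallel>u - h\<parallel>\<^sup>2\<close>, and the radius \<open>R = (2M)^\<theta> \<Delta>^(-\<theta>/2)\<close> makes this at most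
  \<open>\<Delta>/4 + \<Delta>/2\<close>. In both cases \<open>\<Delta> \<le> \<parallel>u\<parallel>\<^sup>2\<close> absorbs the loss.\<close>

section \<open>Square-integrable functions\<close>

lemma sq_int_mult_integrable:
  assumes "sq_int M f" "sq_int M g"
  shows "integrable M (\<lambda>x. f x * g x)"
proof (rule Bochner_Integration.integrable_bound)
  show "integrable M (\<lambda>x. (f x)\<^sup>2 + (g x)\<^sup>2)" using assms by (simp add: sq_int_def)
  show "(\<lambda>x. f x * g x) \<in> borel_measurable M" using assms by (simp add: sq_int_def borel_measurable_times)
  have "\<bar>f x * g x\<bar> \<le> (f x)\<^sup>2 + (g x)\<^sup>2" for x
  proof -
    have "2 * \<bar>f x * g x\<bar> \<le> (f x)\<^sup>2 + (g x)\<^sup>2"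
      using sum_squares_bound[of "\<bar>f x\<bar>" "\<bar>g x\<bar>"] by (simp add: abs_mult mult.assoc)
    then show ?thesis by linarith
  qed
  then show "AE x in M. norm (f x * g x) \<le> norm ((f x)\<^sup>2 + (g x)\<^sup>2)" by simp
qed

lemma sq_int_const: "finite_measure M \<Longrightarrow> sq_int M (\<lambda>x. c)"
  by (simp add: sq_int_def finite_measure.integrable_const)

lemma sq_int_integrable: "finite_measure M \<Longrightarrow> sq_int M f \<Longrightarrow> integrable M f"
  using sq_int_mult_integrable[of M f "\<lambda>x. 1"] sq_int_const[of M 1] by simp

lemma sq_int_add:
  assumes "sq_int M f" "sq_int M g"
  shows "sq_int M (\<lambda>x. f x + g x)"
  using assms sq_int_mult_integrable[OF assms]
  by (simp add: sq_int_def power2_sum mult.assoc borel_measurable_add)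

lemma sq_int_scale: "sq_int M f \<Longrightarrow> sq_int M (\<lambda>x. c * f x)"
  by (simp add: sq_int_def power_mult_distrib borel_measurable_times)

lemma sq_int_diff:
  assumes "sq_int M f" "sq_int M g"
  shows "sq_int M (\<lambda>x. f x - g x)"
  using sq_int_add[OF assms(1) sq_int_scale[OF assms(2), of "-1"]] by simp

lemma sq_int_sum: "(\<And>k. k \<in> A \<Longrightarrow> sq_int M (f k)) \<Longrightarrow> sq_int M (\<lambda>x. \<Sum>k\<in>A. f k x)"
  by (induction A rule: infinite_finite_induct) (simp_all add: sq_int_add, simp_all add: sq_int_def)

lemma L2_inner_diff_left:
  assumes "sq_int M f" "sq_int M g" "sq_int M h"
  shows "L2_inner M (\<lambda>x. f x - g x) h = L2_inner M f h - L2_inner M g h"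
  using sq_int_mult_integrable[OF assms(1,3)] sq_int_mult_integrable[OF assms(2,3)]
  by (simp add: L2_inner_def left_diff_distrib)

lemma L2_norm_sq: "(L2_norm M f)\<^sup>2 = (\<integral>x. (f x)\<^sup>2 \<partial>M)"
  by (simp add: L2_norm_def)

lemma integral_sq_diff:
  assumes "sq_int M f" "sq_int M g"
  shows "(\<integral>x. (f x - g x)\<^sup>2 \<partial>M) = (\<integral>x. (f x)\<^sup>2 \<partial>M) - 2 * L2_inner M f g + (\<integral>x. (g x)\<^sup>2 \<partial>M)"
proof -
  have "(f x - g x)\<^sup>2 = (f x)\<^sup>2 - 2 * (f x * g x) + (g x)\<^sup>2" for x
    by (simp add: power2_diff)
  then show ?thesis
    using assms sq_int_mult_integrable[OF assms] by (simp add: sq_int_def L2_inner_def)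
qed

lemma L2_inner_Cauchy_Schwarz:
  assumes f: "sq_int M f" and g: "sq_int M g"
  shows "(L2_inner M f g)\<^sup>2 \<le> (\<integral>x. (f x)\<^sup>2 \<partial>M) * (\<integral>x. (g x)\<^sup>2 \<partial>M)"
proof -
  define A where "A = (\<integral>x. (f x)\<^sup>2 \<partial>M)"
  define B where "B = L2_inner M f g"
  define C where "C = (\<integral>x. (g x)\<^sup>2 \<partial>M)"
  have quadratic: "0 \<le> A - 2 * t * B + t\<^sup>2 * C" for t
  proof -
    have "0 \<le> (\<integral>x. (f x - t * g x)\<^sup>2 \<partial>M)" by simp
    also have "\<dots> = A - 2 * t * B + t\<^sup>2 * C"
      using integral_sq_diff[OF f sq_int_scale[OF g, of t]]
      by (simp add: A_def B_def C_def L2_inner_def power_mult_distrib mult.left_commute)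
    finally show ?thesis .
  qed
  have "C \<ge> 0" unfolding C_def by simp
  then consider "C = 0" | "C > 0" by linarith
  then have "B\<^sup>2 \<le> A * C"
  proof cases
    case 1
    have "B = 0"
    proof (rule ccontr)
      assume "B \<noteq> 0"
      then show False using quadratic[of "(A + 1) / (2 * B)"] 1 by simp
    qed
    then show ?thesis using 1 by simp
  next
    case 2
    then show ?thesis using quadratic[of "B / C"] by (simp add: field_simps power2_eq_square)
  qed
  then show ?thesis by (simp add: A_def B_def C_def)
qed

section \<open>Orthonormal systems and Bessel's inequality\<close>

definition orthonormal_system :: "'a measure \<Rightarrow> (nat \<Rightarrow> 'a \<Rightarrow> real) \<Rightarrow> bool" where
  "orthonormal_system M phi \<longleftrightarrow>
     (\<forall>k. sq_int M (phi k)) \<and> (\<forall>j k. L2_inner M (phi j) (phi k) = (if j = k then 1 else 0))"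

lemma orthonormal_system_sq_int: "orthonormal_system M phi \<Longrightarrow> sq_int M (phi k)"
  by (simp add: orthonormal_system_def)

lemma orthonormal_system_L2_inner:
  "orthonormal_system M phi \<Longrightarrow> L2_inner M (phi j) (phi k) = (if j = k then 1 else 0)"
  by (simp add: orthonormal_system_def)

lemma mean_zero_ONB_orthonormal_system: "mean_zero_ONB M phi \<Longrightarrow> orthonormal_system M phi"
  by (simp add: mean_zero_ONB_def orthonormal_system_def)

lemma L2_inner_sum_right:
  assumes "orthonormal_system M phi" "sq_int M f"
  shows "L2_inner M f (\<lambda>x. \<Sum>k\<in>A. a k * phi k x) = (\<Sum>k\<in>A. a k * L2_inner M f (phi k))"
proof -
  have "L2_inner M f (\<lambda>x. \<Sum>k\<in>A. a k * phi k x) = (\<integral>x. (\<Sum>k\<in>A. a k * (f x * phi k x)) \<partial>M)"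
    by (simp add: L2_inner_def sum_distrib_left mult.left_commute)
  also have "\<dots> = (\<Sum>k\<in>A. a k * L2_inner M f (phi k))"
    using sq_int_mult_integrable[OF assms(2) orthonormal_system_sq_int[OF assms(1)]]
    by (simp add: L2_inner_def)
  finally show ?thesis .
qed

lemma L2_inner_orthonormal_sum:
  assumes "orthonormal_system M phi" "finite A"
  shows "L2_inner M (phi j) (\<lambda>x. \<Sum>k\<in>A. a k * phi k x) = (if j \<in> A then a j else 0)"
proof -
  have "L2_inner M (phi j) (\<lambda>x. \<Sum>k\<in>A. a k * phi k x) = (\<Sum>k\<in>A. if j = k then a k else 0)"
    using L2_inner_sum_right[OF assms(1) orthonormal_system_sq_int[OF assms(1)]]
    by (simp add: orthonormal_system_L2_inner[OF assms(1)] if_distrib[of "\<lambda>t. _ * t"] cong: if_cong)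
  then show ?thesis using assms(2) by simp
qed

lemma integral_sq_orthonormal_sum:
  assumes "orthonormal_system M phi" "finite A"
  shows "(\<integral>x. (\<Sum>k\<in>A. a k * phi k x)\<^sup>2 \<partial>M) = (\<Sum>k\<in>A. (a k)\<^sup>2)"
proof -
  have "sq_int M (\<lambda>x. \<Sum>k\<in>A. a k * phi k x)"
    by (intro sq_int_sum sq_int_scale orthonormal_system_sq_int[OF assms(1)])
  then have "(\<integral>x. (\<Sum>k\<in>A. a k * phi k x)\<^sup>2 \<partial>M)
      = (\<Sum>j\<in>A. a j * L2_inner M (phi j) (\<lambda>x. \<Sum>k\<in>A. a k * phi k x))"
    using L2_inner_sum_right[OF assms(1)] by (simp add: L2_inner_def power2_eq_square mult.commute)
  then show ?thesis
    using L2_inner_orthonormal_sum[OF assms] by (simp add: power2_eq_square)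
qed

lemma Bessel_inequality_finite:
  assumes "orthonormal_system M phi" "sq_int M f" "finite A"
  shows "(\<Sum>k\<in>A. (L2_inner M f (phi k))\<^sup>2) \<le> (\<integral>x. (f x)\<^sup>2 \<partial>M)"
proof -
  define s where "s = (\<lambda>x. \<Sum>k\<in>A. L2_inner M f (phi k) * phi k x)"
  have "sq_int M s"
    unfolding s_def by (intro sq_int_sum sq_int_scale orthonormal_system_sq_int[OF assms(1)])
  have "0 \<le> (\<integral>x. (f x - s x)\<^sup>2 \<partial>M)" by simp
  also have "\<dots> = (\<integral>x. (f x)\<^sup>2 \<partial>M) - (\<Sum>k\<in>A. (L2_inner M f (phi k))\<^sup>2)"
    using integral_sq_diff[OF assms(2) \<open>sq_int M s\<close>]
      L2_inner_sum_right[OF assms(1,2)] integral_sq_orthonormal_sum[OF assms(1,3)]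
    by (simp add: s_def power2_eq_square)
  finally show ?thesis by simp
qed

lemma Bessel_inequality:
  assumes "orthonormal_system M phi" "sq_int M f"
  shows "summable (\<lambda>k. (L2_inner M f (phi k))\<^sup>2)"
    and "(\<Sum>k. (L2_inner M f (phi k))\<^sup>2) \<le> (\<integral>x. (f x)\<^sup>2 \<partial>M)"
proof -
  have partial: "(\<Sum>k<n. (L2_inner M f (phi k))\<^sup>2) \<le> (\<integral>x. (f x)\<^sup>2 \<partial>M)" for n
    using Bessel_inequality_finite[OF assms] by simp
  show summable: "summable (\<lambda>k. (L2_inner M f (phi k))\<^sup>2)"
    by (rule summableI_nonneg_bounded[OF _ partial]) simp
  show "(\<Sum>k. (L2_inner M f (phi k))\<^sup>2) \<le> (\<integral>x. (f x)\<^sup>2 \<partial>M)"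
    by (rule suminf_le_const[OF summable partial])
qed

section \<open>Riesz--Fischer and Parseval\<close>

lemma abs_le_inverse_add_mult_sq:
  fixes t d :: real
  assumes "t > 0"
  shows "\<bar>d\<bar> \<le> 1 / t + t * d\<^sup>2"
proof (cases "t * \<bar>d\<bar> \<le> 1")
  case True
  then have "\<bar>d\<bar> \<le> 1 / t" using assms by (simp add: le_divide_eq mult.commute)
  then show ?thesis using assms by (simp add: add_increasing2)
next
  case False
  then have "\<bar>d\<bar> \<le> t * \<bar>d\<bar> * \<bar>d\<bar>" by (simp add: mult_le_cancel_right1)
  then show ?thesis using assms by (simp add: power2_eq_square abs_mult_self_eq mult.assoc add_increasing)
qed

text \<open>The weighted series of squared increments is integrable, hence finite almost everywhere, and
  \<open>\<bar>d\<bar> \<le> 2^-j + 2^j d\<^sup>2\<close> then makes the increments absolutely summable.\<close>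

lemma AE_convergent_of_summable_weighted_increments:
  fixes f :: "nat \<Rightarrow> 'a \<Rightarrow> real"
  assumes [measurable]: "\<And>j. f j \<in> borel_measurable M"
    and integrable: "\<And>j. integrable M (\<lambda>x. (f (Suc j) x - f j x)\<^sup>2)"
    and summable: "summable (\<lambda>j. 2 ^ j * (\<integral>x. (f (Suc j) x - f j x)\<^sup>2 \<partial>M))"
  shows "AE x in M. convergent (\<lambda>j. f j x)"
proof -
  define h where "h j x = 2 ^ j * (f (Suc j) x - f j x)\<^sup>2" for j x
  have [measurable]: "h j \<in> borel_measurable M" for j unfolding h_def by measurable
  have h_nonneg: "0 \<le> h j x" for j x unfolding h_def by simp
  have "(\<integral>\<^sup>+x. (\<Sum>j. ennreal (h j x)) \<partial>M) = (\<Sum>j. \<integral>\<^sup>+x. ennreal (h j x) \<partial>M)"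
    by (rule nn_integral_suminf) measurable
  also have "\<dots> = (\<Sum>j. ennreal (2 ^ j * (\<integral>x. (f (Suc j) x - f j x)\<^sup>2 \<partial>M)))"
    using nn_integral_eq_integral[OF integrable_mult_right[OF integrable]] by (simp add: h_def)
  also have "\<dots> = ennreal (\<Sum>j. 2 ^ j * (\<integral>x. (f (Suc j) x - f j x)\<^sup>2 \<partial>M))"
    by (rule suminf_ennreal2[OF _ summable]) simp
  finally have "AE x in M. (\<Sum>j. ennreal (h j x)) \<noteq> \<infinity>"
    by (intro nn_integral_PInf_AE) simp_all
  then show ?thesis
  proof eventually_elim
    case (elim x)
    have "summable (\<lambda>j. h j x)"
      using h_nonneg elim by (intro summable_suminf_not_top) auto
    then have "summable (\<lambda>j. (1 / 2) ^ j + h j x)"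
      by (intro summable_add summable_geometric) simp_all
    moreover have "norm (f (Suc j) x - f j x) \<le> (1 / 2) ^ j + h j x" for j
      using abs_le_inverse_add_mult_sq[of "2 ^ j" "f (Suc j) x - f j x"]
      by (simp add: h_def power_one_over)
    ultimately have "summable (\<lambda>j. f (Suc j) x - f j x)"
      by (rule summable_comparison_test'[where N = 0])
    then have "convergent (\<lambda>n. f 0 x + (\<Sum>j<n. f (Suc j) x - f j x))"
      by (simp add: summable_iff_convergent convergent_add_const_iff)
    moreover have "f 0 x + (\<Sum>j<n. f (Suc j) x - f j x) = f n x" for n
      using sum_lessThan_telescope[of "\<lambda>j. f j x" n] by simp
    ultimately show ?case by simp
  qed
qed

lemma integral_le_of_AE_tendsto:
  fixes F :: "nat \<Rightarrow> 'a \<Rightarrow> real"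
  assumes [measurable]: "\<And>j. F j \<in> borel_measurable M" "G \<in> borel_measurable M"
    and nonneg: "\<And>j x. 0 \<le> F j x"
    and lim: "AE x in M. (\<lambda>j. F j x) \<longlonglongrightarrow> G x"
    and integrable: "\<And>j. integrable M (F j)"
    and bound: "\<And>j. (\<integral>x. F j x \<partial>M) \<le> b j" and b: "b \<longlonglongrightarrow> B"
  shows "integrable M G" and "(\<integral>x. G x \<partial>M) \<le> B"
proof -
  have "0 \<le> b j" for j
    using Bochner_Integration.integral_nonneg[OF nonneg] bound[of j] by (rule order_trans)
  then have "0 \<le> B" by (intro LIMSEQ_le_const[OF b]) simp
  have G_lim: "AE x in M. ennreal (G x) = liminf (\<lambda>j. ennreal (F j x))"
    using lim by eventually_elim (rule lim_imp_Liminf[symmetric]; simp add: tendsto_ennrealI)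
  have G_nonneg: "AE x in M. 0 \<le> G x"
    using lim by eventually_elim (auto intro: LIMSEQ_le_const nonneg)
  have "(\<integral>\<^sup>+x. ennreal (G x) \<partial>M) = (\<integral>\<^sup>+x. liminf (\<lambda>j. ennreal (F j x)) \<partial>M)"
    by (rule nn_integral_cong_AE[OF G_lim])
  also have "\<dots> \<le> liminf (\<lambda>j. \<integral>\<^sup>+x. ennreal (F j x) \<partial>M)"
    by (rule nn_integral_liminf) measurable
  also have "\<dots> \<le> liminf (\<lambda>j. ennreal (b j))"
    using nn_integral_eq_integral[OF integrable] nonneg bound
    by (intro Liminf_mono always_eventually allI) (simp add: ennreal_leI)
  also have "\<dots> = ennreal B"
    by (simp add: lim_imp_Liminf tendsto_ennrealI[OF b])
  finally have le: "(\<integral>\<^sup>+x. ennreal (G x) \<partial>M) \<le> ennreal B" .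
  show "integrable M G"
    using G_nonneg le by (intro integrableI_nonneg) (auto simp: top.not_eq_extremum le_less_trans)
  then show "(\<integral>x. G x \<partial>M) \<le> B"
    using le nn_integral_eq_integral[OF _ G_nonneg] \<open>0 \<le> B\<close> by (simp add: ennreal_le_iff)
qed

lemma orthonormal_partial_sums_dist:
  assumes ON: "orthonormal_system M phi" and summable: "summable (\<lambda>k. (c k)\<^sup>2)"
  shows "(\<integral>x. ((\<Sum>k<n. c k * phi k x) - (\<Sum>k<m. c k * phi k x))\<^sup>2 \<partial>M)
    \<le> (\<Sum>k. (c (k + m))\<^sup>2) + (\<Sum>k. (c (k + n))\<^sup>2)"
proof -
  have tail_nonneg: "0 \<le> (\<Sum>k. (c (k + i))\<^sup>2)" for i
    using summable_ignore_initial_segment[OF summable] by (intro suminf_nonneg) auto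
  have ordered: "(\<integral>x. ((\<Sum>k<n. c k * phi k x) - (\<Sum>k<m. c k * phi k x))\<^sup>2 \<partial>M) \<le> (\<Sum>k. (c (k + m))\<^sup>2)"
    if "m \<le> n" for m n
  proof -
    have "(\<Sum>k<n. c k * phi k x) - (\<Sum>k<m. c k * phi k x) = (\<Sum>k\<in>{m..<n}. c k * phi k x)" for x
      using sum.atLeastLessThan_concat[of 0 m n "\<lambda>k. c k * phi k x"] that
      by (simp add: atLeast0LessThan)
    then have "(\<integral>x. ((\<Sum>k<n. c k * phi k x) - (\<Sum>k<m. c k * phi k x))\<^sup>2 \<partial>M) = (\<Sum>k\<in>{m..<n}. (c k)\<^sup>2)"
      using integral_sq_orthonormal_sum[OF ON, of "{m..<n}" c] by simp
    also have "\<dots> = (\<Sum>i<n - m. (c (i + m))\<^sup>2)"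
      using sum.shift_bounds_nat_ivl[of "\<lambda>k. (c k)\<^sup>2" 0 m "n - m"] that
      by (simp add: atLeast0LessThan)
    also have "\<dots> \<le> (\<Sum>k. (c (k + m))\<^sup>2)"
      using summable_ignore_initial_segment[OF summable, of m] by (intro sum_le_suminf) auto
    finally show ?thesis .
  qed
  show ?thesis
  proof (cases "m \<le> n")
    case True
    then show ?thesis using ordered[OF True] tail_nonneg[of n] by linarith
  next
    case False
    have "(\<lambda>x. ((\<Sum>k<n. c k * phi k x) - (\<Sum>k<m. c k * phi k x))\<^sup>2)
        = (\<lambda>x. ((\<Sum>k<m. c k * phi k x) - (\<Sum>k<n. c k * phi k x))\<^sup>2)"
      by (rule ext) (rule power2_commute)
    then show ?thesis using ordered[of n m] False tail_nonneg[of m] by simp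
  qed
qed

lemma LIMSEQ_zero_geometric_indices:
  fixes T :: "nat \<Rightarrow> real"
  assumes "T \<longlonglongrightarrow> 0" "r > 0"
  obtains N where "\<And>j. T (N j) \<le> r ^ j"
proof -
  have "\<exists>n. T n \<le> r ^ j" for j
  proof -
    have "\<forall>\<^sub>F n in sequentially. T n < r ^ j"
      using assms by (intro order_tendstoD(2)[OF assms(1)]) simp
    then show ?thesis unfolding eventually_sequentially by (meson less_imp_le order_refl)
  qed
  then show ?thesis using that by metis
qed

text \<open>Riesz--Fischer: the L2 sum is the almost everywhere limit of a fast subsequence of the partial
  sums.\<close>

lemma orthonormal_series_L2_limit:
  assumes ON: "orthonormal_system M phi" and summable: "summable (\<lambda>k. (c k)\<^sup>2)"
  obtains g where "sq_int M g"
    and "\<And>n. (\<integral>x. (g x - (\<Sum>k<n. c k * phi k x))\<^sup>2 \<partial>M) \<le> (\<Sum>k. (c (k + n))\<^sup>2)"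
proof -
  define s where "s n x = (\<Sum>k<n. c k * phi k x)" for n x
  define T where "T n = (\<Sum>k. (c (k + n))\<^sup>2)" for n
  have sq_int_s: "sq_int M (s n)" for n
    unfolding s_def by (intro sq_int_sum sq_int_scale orthonormal_system_sq_int[OF ON])
  have [measurable]: "s n \<in> borel_measurable M" for n using sq_int_s by (simp add: sq_int_def)
  have integrable_s: "integrable M (\<lambda>x. (s n x - s m x)\<^sup>2)" for m n
    using sq_int_diff[OF sq_int_s sq_int_s] by (simp add: sq_int_def)
  have dist: "(\<integral>x. (s n x - s m x)\<^sup>2 \<partial>M) \<le> T m + T n" for m n
    unfolding s_def T_def by (rule orthonormal_partial_sums_dist[OF ON summable])
  obtain N where N: "\<And>j. T (N j) \<le> (1 / 8) ^ j"
    using LIMSEQ_zero_geometric_indices[OF suminf_exist_split2[OF summable]] unfolding T_def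
    by (metis zero_less_divide_1_iff zero_less_numeral)
  have "norm (2 ^ j * (\<integral>x. (s (N (Suc j)) x - s (N j) x)\<^sup>2 \<partial>M)) \<le> 2 * (1 / 4) ^ j" for j
  proof -
    have "(\<integral>x. (s (N (Suc j)) x - s (N j) x)\<^sup>2 \<partial>M) \<le> 2 * (1 / 8) ^ j"
      using dist[where m = "N j" and n = "N (Suc j)"] N[of j] N[of "Suc j"]
        power_decreasing[of j "Suc j" "1 / 8 :: real"] by linarith
    then have "2 ^ j * (\<integral>x. (s (N (Suc j)) x - s (N j) x)\<^sup>2 \<partial>M) \<le> 2 ^ j * (2 * (1 / 8) ^ j)"
      by (rule mult_left_mono) simp
    also have "\<dots> = 2 * (2 * (1 / 8)) ^ j" by (simp only: power_mult_distrib mult_ac)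
    finally show ?thesis by simp
  qed
  then have "summable (\<lambda>j. 2 ^ j * (\<integral>x. (s (N (Suc j)) x - s (N j) x)\<^sup>2 \<partial>M))"
    by (intro summable_comparison_test'[OF summable_mult[OF summable_geometric[of "1 / 4 :: real"]], where N = 0])
       simp_all
  then have "AE x in M. convergent (\<lambda>j. s (N j) x)"
    using integrable_s by (intro AE_convergent_of_summable_weighted_increments) simp_all
  define g where "g x = lim (\<lambda>j. s (N j) x)" for x
  have [measurable]: "g \<in> borel_measurable M"
    unfolding g_def by (rule borel_measurable_lim_metric) simp
  have g_lim: "AE x in M. (\<lambda>j. s (N j) x) \<longlonglongrightarrow> g x"
    using \<open>AE x in M. convergent _\<close> by eventually_elim (simp add: g_def convergent_LIMSEQ_iff)
  have g_dist: "integrable M (\<lambda>x. (g x - s n x)\<^sup>2)" "(\<integral>x. (g x - s n x)\<^sup>2 \<partial>M) \<le> T n" for n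
  proof -
    have b: "(\<lambda>j. (1 / 8) ^ j + T n) \<longlonglongrightarrow> T n"
      using tendsto_add[OF LIMSEQ_power_zero tendsto_const, of "1 / 8" "T n"] by simp
    have bound: "(\<integral>x. (s (N j) x - s n x)\<^sup>2 \<partial>M) \<le> (1 / 8) ^ j + T n" for j
      using dist[where m = n and n = "N j"] N[of j] by linarith
    have lim: "AE x in M. (\<lambda>j. (s (N j) x - s n x)\<^sup>2) \<longlonglongrightarrow> (g x - s n x)\<^sup>2"
      using g_lim by eventually_elim (intro tendsto_intros)
    show "integrable M (\<lambda>x. (g x - s n x)\<^sup>2)" "(\<integral>x. (g x - s n x)\<^sup>2 \<partial>M) \<le> T n"
      using integral_le_of_AE_tendsto[OF _ _ _ lim integrable_s bound b] by simp_all
  qed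
  show ?thesis
  proof
    show "sq_int M g" using g_dist(1)[of 0] by (simp add: sq_int_def s_def)
    show "(\<integral>x. (g x - (\<Sum>k<n. c k * phi k x))\<^sup>2 \<partial>M) \<le> (\<Sum>k. (c (k + n))\<^sup>2)" for n
      using g_dist(2)[of n] by (simp add: s_def T_def)
  qed
qed

lemma L2_inner_commute: "L2_inner M f g = L2_inner M g f"
  by (simp add: L2_inner_def mult.commute)

lemma L2_inner_tendsto:
  assumes s: "\<And>n. sq_int M (s n)" and g: "sq_int M g" and f: "sq_int M f"
    and lim: "(\<lambda>n. \<integral>x. (g x - s n x)\<^sup>2 \<partial>M) \<longlonglongrightarrow> 0"
  shows "(\<lambda>n. L2_inner M (s n) f) \<longlonglongrightarrow> L2_inner M g f"
proof -
  have bound: "norm (L2_inner M (\<lambda>x. g x - s n x) f)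
      \<le> sqrt (\<integral>x. (g x - s n x)\<^sup>2 \<partial>M) * sqrt (\<integral>x. (f x)\<^sup>2 \<partial>M)" for n
  proof -
    have "norm (L2_inner M (\<lambda>x. g x - s n x) f) = sqrt ((L2_inner M (\<lambda>x. g x - s n x) f)\<^sup>2)"
      by simp
    also have "\<dots> \<le> sqrt ((\<integral>x. (g x - s n x)\<^sup>2 \<partial>M) * (\<integral>x. (f x)\<^sup>2 \<partial>M))"
      by (rule real_sqrt_le_mono[OF L2_inner_Cauchy_Schwarz[OF sq_int_diff[OF g s] f]])
    finally show ?thesis by (simp only: real_sqrt_mult)
  qed
  have "(\<lambda>n. sqrt (\<integral>x. (g x - s n x)\<^sup>2 \<partial>M)) \<longlonglongrightarrow> 0"
    using tendsto_real_sqrt[OF lim] by simp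
  then have "(\<lambda>n. sqrt (\<integral>x. (g x - s n x)\<^sup>2 \<partial>M) * sqrt (\<integral>x. (f x)\<^sup>2 \<partial>M)) \<longlonglongrightarrow> 0"
    by (rule tendsto_mult_left_zero)
  then have "(\<lambda>n. L2_inner M (\<lambda>x. g x - s n x) f) \<longlonglongrightarrow> 0"
    by (rule Lim_null_comparison[OF always_eventually[OF allI[OF bound]]])
  then have "(\<lambda>n. L2_inner M g f - L2_inner M (\<lambda>x. g x - s n x) f) \<longlonglongrightarrow> L2_inner M g f - 0"
    by (intro tendsto_diff tendsto_const)
  moreover have "L2_inner M g f - L2_inner M (\<lambda>x. g x - s n x) f = L2_inner M (s n) f" for n
    using L2_inner_diff_left[OF g s f, of n] by simp
  ultimately show ?thesis by simp
qed

text \<open>Completeness of the basis is used only once: the L2 sum of the Fourier series of \<open>u\<close>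
  has the same coefficients and the same (zero) mean as \<open>u\<close>, hence equals \<open>u\<close> almost everywhere.\<close>

lemma mean_zero_ONB_Parseval:
  assumes M: "prob_space M" and ONB: "mean_zero_ONB M phi"
    and u: "sq_int M u" and u_mean: "(\<integral>x. u x \<partial>M) = 0"
  shows "(\<Sum>k. (L2_inner M u (phi k))\<^sup>2) = (\<integral>x. (u x)\<^sup>2 \<partial>M)"
proof -
  have ON: "orthonormal_system M phi" by (rule mean_zero_ONB_orthonormal_system[OF ONB])
  have phi_mean: "(\<integral>x. phi k x \<partial>M) = 0" for k using ONB by (simp add: mean_zero_ONB_def)
  have complete: "AE x in M. f x = 0"
    if "sq_int M f" "(\<integral>x. f x \<partial>M) = 0" "\<And>k. L2_inner M f (phi k) = 0" for f
    using ONB that by (simp add: mean_zero_ONB_def)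
  have one: "sq_int M (\<lambda>x. 1)" by (rule sq_int_const[OF prob_space.finite_measure[OF M]])
  define c where "c k = L2_inner M u (phi k)" for k
  define s where "s n = (\<lambda>x. \<Sum>k<n. c k * phi k x)" for n
  have sq_int_s: "sq_int M (s n)" for n
    unfolding s_def by (intro sq_int_sum sq_int_scale orthonormal_system_sq_int[OF ON])
  have summable: "summable (\<lambda>k. (c k)\<^sup>2)" unfolding c_def by (rule Bessel_inequality(1)[OF ON u])
  obtain g where g: "sq_int M g"
    and "\<And>n. (\<integral>x. (g x - (\<Sum>k<n. c k * phi k x))\<^sup>2 \<partial>M) \<le> (\<Sum>k. (c (k + n))\<^sup>2)"
    using orthonormal_series_L2_limit[OF ON summable] by blast
  then have g_dist: "(\<integral>x. (g x - s n x)\<^sup>2 \<partial>M) \<le> (\<Sum>k. (c (k + n))\<^sup>2)" for n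
    by (simp add: s_def)
  have "(\<lambda>n. \<integral>x. (g x - s n x)\<^sup>2 \<partial>M) \<longlonglongrightarrow> 0"
  proof (rule tendsto_sandwich[OF _ _ tendsto_const suminf_exist_split2[OF summable]])
    show "\<forall>\<^sub>F n in sequentially. 0 \<le> (\<integral>x. (g x - s n x)\<^sup>2 \<partial>M)" by simp
    show "\<forall>\<^sub>F n in sequentially. (\<integral>x. (g x - s n x)\<^sup>2 \<partial>M) \<le> (\<Sum>k. (c (k + n))\<^sup>2)"
      using g_dist by (intro always_eventually) simp
  qed
  note s_lim = L2_inner_tendsto[OF sq_int_s g _ this]
  have g_coeff: "L2_inner M g (phi k) = c k" for k
  proof (rule LIMSEQ_unique[OF s_lim[OF orthonormal_system_sq_int[OF ON]]])
    have "L2_inner M (s n) (phi k) = c k" if "n \<ge> Suc k" for n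
    proof -
      have "L2_inner M (s n) (phi k) = L2_inner M (phi k) (s n)" by (rule L2_inner_commute)
      also have "\<dots> = (if k \<in> {..<n} then c k else 0)"
        unfolding s_def by (rule L2_inner_orthonormal_sum[OF ON]) simp
      finally show ?thesis using that by simp
    qed
    then show "(\<lambda>n. L2_inner M (s n) (phi k)) \<longlonglongrightarrow> c k"
      by (intro tendsto_eventually) (auto simp: eventually_sequentially)
  qed
  have coeff: "L2_inner M (\<lambda>x. u x - g x) (phi k) = 0" for k
    using L2_inner_diff_left[OF u g orthonormal_system_sq_int[OF ON], of k] g_coeff[of k]
    unfolding c_def by linarith
  have s_mean: "L2_inner M (s n) (\<lambda>x. 1) = 0" for n
  proof -
    have "L2_inner M (s n) (\<lambda>x. 1) = L2_inner M (\<lambda>x. 1) (s n)" by (rule L2_inner_commute)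
    also have "\<dots> = (\<Sum>k<n. c k * L2_inner M (\<lambda>x. 1) (phi k))"
      unfolding s_def by (rule L2_inner_sum_right[OF ON one])
    also have "\<dots> = 0" by (simp add: L2_inner_def phi_mean)
    finally show ?thesis .
  qed
  have "L2_inner M g (\<lambda>x. 1) = 0"
    by (rule LIMSEQ_unique[OF s_lim[OF one]]) (simp only: s_mean tendsto_const)
  then have mean: "(\<integral>x. u x - g x \<partial>M) = 0"
    using L2_inner_diff_left[OF u g one] u_mean by (simp add: L2_inner_def)
  have "AE x in M. u x - g x = 0"
    using complete[OF sq_int_diff[OF u g] mean coeff] .
  then have "AE x in M. (u x)\<^sup>2 = (g x - s 0 x)\<^sup>2"
    by eventually_elim (simp add: s_def)
  moreover have [measurable]: "u \<in> borel_measurable M" "g \<in> borel_measurable M"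
    using u g by (simp_all add: sq_int_def)
  ultimately have "(\<integral>x. (u x)\<^sup>2 \<partial>M) = (\<integral>x. (g x - s 0 x)\<^sup>2 \<partial>M)"
    by (intro integral_cong_AE) (simp_all add: s_def)
  also have "\<dots> \<le> (\<Sum>k. (c k)\<^sup>2)" using g_dist[of 0] by simp
  finally show ?thesis
    using Bessel_inequality(2)[OF ON u] unfolding c_def by linarith
qed

section \<open>The RKHS classes and the density deviation\<close>

lemma F_class_sq_int: "F_class M phi lam \<theta> Mc f \<Longrightarrow> sq_int M f"
  by (simp add: F_class_def in_RKHS_def split: if_splits)

lemma RKHS_norm_sq:
  assumes "\<And>k. lam k > 0" "in_RKHS M phi lam f"
  shows "(RKHS_norm M phi lam f)\<^sup>2 = (\<Sum>k. (L2_inner M f (phi k))\<^sup>2 / lam k)"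
  using assms by (simp add: RKHS_norm_def in_RKHS_def suminf_nonneg less_imp_le)

lemma RKHS_norm_nonneg:
  assumes "\<And>k. lam k > 0" "in_RKHS M phi lam f"
  shows "0 \<le> RKHS_norm M phi lam f"
  using assms by (simp add: RKHS_norm_def in_RKHS_def suminf_nonneg less_imp_le)

lemma integral_dens_dev:
  assumes "prob_space P0" "prob_space P" "sets P = sets P0" "absolutely_continuous P0 P"
    and u: "sq_int P0 (dens_dev P0 P)" and f: "sq_int P0 f"
  shows "(\<integral>x. f x \<partial>P) = L2_inner P0 (dens_dev P0 P) f + (\<integral>x. f x \<partial>P0)"
proof -
  interpret P0: prob_space P0 by fact
  interpret P: prob_space P by fact
  have [measurable]: "f \<in> borel_measurable P0" using f by (simp add: sq_int_def)
  have "(\<integral>x. f x \<partial>P) = (\<integral>x. enn2real (RN_deriv P0 P x) * f x \<partial>P0)"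
    using assms(3,4) by (intro P0.RN_deriv_integral P.sigma_finite_measure_axioms) simp_all
  also have "\<dots> = (\<integral>x. dens_dev P0 P x * f x + f x \<partial>P0)"
    by (simp add: dens_dev_def algebra_simps)
  also have "\<dots> = L2_inner P0 (dens_dev P0 P) f + (\<integral>x. f x \<partial>P0)"
    using sq_int_mult_integrable[OF u f] sq_int_integrable[OF P0.finite_measure_axioms f]
    by (simp add: L2_inner_def)
  finally show ?thesis .
qed

lemma integral_dens_dev_eq_0:
  assumes "prob_space P0" "prob_space P" "sets P = sets P0" "absolutely_continuous P0 P"
    and "sq_int P0 (dens_dev P0 P)"
  shows "(\<integral>x. dens_dev P0 P x \<partial>P0) = 0"
  using integral_dens_dev[OF assms sq_int_const[OF prob_space.finite_measure[OF assms(1)]], of 1]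
    prob_space.prob_space[OF assms(1)] prob_space.prob_space[OF assms(2)]
  by (simp add: L2_inner_def)

section \<open>The shrinkage loss\<close>

definition shrinkage_loss ::
  "'a measure \<Rightarrow> (nat \<Rightarrow> 'a \<Rightarrow> real) \<Rightarrow> (nat \<Rightarrow> real) \<Rightarrow> real \<Rightarrow> ('a \<Rightarrow> real) \<Rightarrow> real" where
  "shrinkage_loss M phi lam \<rho> f = (\<Sum>k. \<rho>\<^sup>2 / (lam k + \<rho>\<^sup>2) * (L2_inner M f (phi k))\<^sup>2)"

lemma shrinkage_weight_bounds:
  fixes l \<rho> :: real
  assumes "l > 0"
  shows "0 \<le> \<rho>\<^sup>2 / (l + \<rho>\<^sup>2)" "\<rho>\<^sup>2 / (l + \<rho>\<^sup>2) \<le> 1" "\<rho>\<^sup>2 / (l + \<rho>\<^sup>2) \<le> \<rho>\<^sup>2 / l"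
  using assms by (simp_all add: add_pos_nonneg frac_le)

lemma norm_shrinkage_term:
  fixes l \<rho> x :: real
  assumes "l > 0"
  shows "norm (\<rho>\<^sup>2 / (l + \<rho>\<^sup>2) * x\<^sup>2) = \<rho>\<^sup>2 / (l + \<rho>\<^sup>2) * x\<^sup>2"
  using add_pos_nonneg[OF assms zero_le_power2[of \<rho>]] by simp

lemma summable_shrinkage:
  fixes lam c :: "nat \<Rightarrow> real"
  assumes "\<And>k. lam k > 0" "summable (\<lambda>k. (c k)\<^sup>2)"
  shows "summable (\<lambda>k. \<rho>\<^sup>2 / (lam k + \<rho>\<^sup>2) * (c k)\<^sup>2)"
proof (rule summable_comparison_test'[OF assms(2), where N = 0])
  show "norm (\<rho>\<^sup>2 / (lam k + \<rho>\<^sup>2) * (c k)\<^sup>2) \<le> (c k)\<^sup>2" for k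
    unfolding norm_shrinkage_term[OF assms(1)]
    using shrinkage_weight_bounds(1,2)[OF assms(1)[of k], of \<rho>] by (intro mult_left_le_one_le) simp_all
qed

lemma eta_sq_eq_L2_norm_minus_shrinkage_loss:
  assumes P0: "prob_space P0" and ONB: "mean_zero_ONB P0 phi" and lam: "\<And>k. lam k > 0"
    and P: "prob_space P" "sets P = sets P0" "absolutely_continuous P0 P"
    and u: "sq_int P0 (dens_dev P0 P)"
  shows "eta_sq phi lam \<rho> P = (L2_norm P0 (dens_dev P0 P))\<^sup>2 - shrinkage_loss P0 phi lam \<rho> (dens_dev P0 P)"
proof -
  have ON: "orthonormal_system P0 phi" by (rule mean_zero_ONB_orthonormal_system[OF ONB])
  define c where "c k = L2_inner P0 (dens_dev P0 P) (phi k)" for k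
  have summable: "summable (\<lambda>k. (c k)\<^sup>2)" unfolding c_def by (rule Bessel_inequality(1)[OF ON u])
  have "(\<integral>x. phi k x \<partial>P) = c k" for k
    using integral_dens_dev[OF P0 P u orthonormal_system_sq_int[OF ON]] ONB
    by (simp add: c_def mean_zero_ONB_def)
  then have "eta_sq phi lam \<rho> P = (\<Sum>k. (c k)\<^sup>2 - \<rho>\<^sup>2 / (lam k + \<rho>\<^sup>2) * (c k)\<^sup>2)"
    unfolding eta_sq_def using lam
    by (intro suminf_cong) (simp add: field_simps add_pos_nonneg order.strict_implies_not_eq[symmetric])
  also have "\<dots> = (\<Sum>k. (c k)\<^sup>2) - shrinkage_loss P0 phi lam \<rho> (dens_dev P0 P)"
    unfolding shrinkage_loss_def c_def[symmetric]
    by (rule suminf_diff[OF summable summable_shrinkage[OF lam summable], symmetric])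
  also have "(\<Sum>k. (c k)\<^sup>2) = (L2_norm P0 (dens_dev P0 P))\<^sup>2"
    unfolding c_def L2_norm_sq
    by (rule mean_zero_ONB_Parseval[OF P0 ONB u integral_dens_dev_eq_0[OF P0 P u]])
  finally show ?thesis .
qed

lemma shrinkage_loss_le_RKHS_norm:
  assumes lam: "\<And>k. lam k > 0" and f: "in_RKHS M phi lam f"
  shows "shrinkage_loss M phi lam \<rho> f \<le> \<rho>\<^sup>2 * (RKHS_norm M phi lam f)\<^sup>2"
proof -
  define c where "c k = L2_inner M f (phi k)" for k
  have summable_c: "summable (\<lambda>k. (c k)\<^sup>2 / lam k)" using f by (simp add: in_RKHS_def c_def)
  note summable = summable_mult[OF summable_c, of "\<rho>\<^sup>2"]
  have le: "\<rho>\<^sup>2 / (lam k + \<rho>\<^sup>2) * (c k)\<^sup>2 \<le> \<rho>\<^sup>2 * ((c k)\<^sup>2 / lam k)" for k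
    using mult_right_mono[OF shrinkage_weight_bounds(3)[OF lam[of k], of \<rho>], of "(c k)\<^sup>2"] by simp
  have "shrinkage_loss M phi lam \<rho> f \<le> (\<Sum>k. \<rho>\<^sup>2 * ((c k)\<^sup>2 / lam k))"
    unfolding shrinkage_loss_def c_def[symmetric]
  proof (rule suminf_le[OF le _ summable])
    show "summable (\<lambda>k. \<rho>\<^sup>2 / (lam k + \<rho>\<^sup>2) * (c k)\<^sup>2)"
      by (rule summable_comparison_test'[OF summable, where N = 0])
         (unfold norm_shrinkage_term[OF lam], rule le)
  qed
  also have "\<dots> = \<rho>\<^sup>2 * (\<Sum>k. (c k)\<^sup>2 / lam k)" by (rule suminf_mult[OF summable_c])
  also have "\<dots> = \<rho>\<^sup>2 * (RKHS_norm M phi lam f)\<^sup>2" by (simp add: RKHS_norm_sq[OF lam f] c_def)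
  finally show ?thesis .
qed

lemma summable_shrinkage_loss:
  assumes "orthonormal_system M phi" "\<And>k. lam k > 0" "sq_int M f"
  shows "summable (\<lambda>k. \<rho>\<^sup>2 / (lam k + \<rho>\<^sup>2) * (L2_inner M f (phi k))\<^sup>2)"
  by (rule summable_shrinkage[OF assms(2) Bessel_inequality(1)[OF assms(1,3)]])

lemma shrinkage_loss_le_L2_norm:
  assumes ON: "orthonormal_system M phi" and lam: "\<And>k. lam k > 0" and f: "sq_int M f"
  shows "shrinkage_loss M phi lam \<rho> f \<le> (L2_norm M f)\<^sup>2"
proof -
  have "shrinkage_loss M phi lam \<rho> f \<le> (\<Sum>k. (L2_inner M f (phi k))\<^sup>2)"
    unfolding shrinkage_loss_def
    using shrinkage_weight_bounds(1,2)[OF lam]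
    by (intro suminf_le summable_shrinkage_loss[OF ON lam f] Bessel_inequality(1)[OF ON f] mult_left_le_one_le)
       simp_all
  also have "\<dots> \<le> (L2_norm M f)\<^sup>2" unfolding L2_norm_sq by (rule Bessel_inequality(2)[OF ON f])
  finally show ?thesis .
qed

lemma shrinkage_loss_le_split:
  assumes ON: "orthonormal_system M phi" and lam: "\<And>k. lam k > 0"
    and f: "sq_int M f" and g: "sq_int M g"
  shows "shrinkage_loss M phi lam \<rho> f
    \<le> 2 * shrinkage_loss M phi lam \<rho> g + 2 * shrinkage_loss M phi lam \<rho> (\<lambda>x. f x - g x)"
proof -
  define w where "w k = \<rho>\<^sup>2 / (lam k + \<rho>\<^sup>2)" for k
  define a where "a k = L2_inner M g (phi k)" for k
  define b where "b k = L2_inner M (\<lambda>x. f x - g x) (phi k)" for k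
  have sa: "summable (\<lambda>k. w k * (a k)\<^sup>2)"
    unfolding w_def a_def by (rule summable_shrinkage_loss[OF ON lam g])
  have sb: "summable (\<lambda>k. w k * (b k)\<^sup>2)"
    unfolding w_def b_def by (rule summable_shrinkage_loss[OF ON lam sq_int_diff[OF f g]])
  have "L2_inner M f (phi k) = a k + b k" for k
    using L2_inner_diff_left[OF f g orthonormal_system_sq_int[OF ON]] by (simp add: a_def b_def)
  then have "shrinkage_loss M phi lam \<rho> f = (\<Sum>k. w k * (a k + b k)\<^sup>2)"
    by (simp add: shrinkage_loss_def w_def)
  also have "\<dots> \<le> (\<Sum>k. 2 * (w k * (a k)\<^sup>2) + 2 * (w k * (b k)\<^sup>2))"
  proof (rule suminf_le)
    show "w k * (a k + b k)\<^sup>2 \<le> 2 * (w k * (a k)\<^sup>2) + 2 * (w k * (b k)\<^sup>2)" for k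
    proof -
      have "(a k + b k)\<^sup>2 \<le> 2 * (a k)\<^sup>2 + 2 * (b k)\<^sup>2"
        using sum_squares_bound[of "a k" "b k"] by (simp add: power2_sum)
      moreover have "0 \<le> w k" unfolding w_def by (rule shrinkage_weight_bounds(1)[OF lam])
      ultimately have "w k * (a k + b k)\<^sup>2 \<le> w k * (2 * (a k)\<^sup>2 + 2 * (b k)\<^sup>2)"
        by (rule mult_left_mono)
      then show ?thesis by (simp add: algebra_simps)
    qed
    show "summable (\<lambda>k. w k * (a k + b k)\<^sup>2)"
      unfolding w_def \<open>\<And>k. L2_inner M f (phi k) = a k + b k\<close>[symmetric]
      by (rule summable_shrinkage_loss[OF ON lam f])
    show "summable (\<lambda>k. 2 * (w k * (a k)\<^sup>2) + 2 * (w k * (b k)\<^sup>2))"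
      by (intro summable_add summable_mult sa sb)
  qed
  also have "\<dots> = 2 * shrinkage_loss M phi lam \<rho> g + 2 * shrinkage_loss M phi lam \<rho> (\<lambda>x. f x - g x)"
    using suminf_add[OF summable_mult[OF sa] summable_mult[OF sb]] suminf_mult[OF sa] suminf_mult[OF sb]
    by (simp add: shrinkage_loss_def w_def a_def b_def)
  finally show ?thesis .
qed

lemma shrinkage_loss_le_of_RKHS_ball:
  assumes lam: "\<And>k. lam k > 0" and f: "F_class M phi lam 0 Mc f"
    and "0 \<le> \<rho>" "\<rho> \<le> sqrt (\<Delta> / (2 * Mc\<^sup>2))" "Mc > 0"
  shows "shrinkage_loss M phi lam \<rho> f \<le> \<Delta> / 2"
proof -
  have f_RKHS: "in_RKHS M phi lam f" and "RKHS_norm M phi lam f \<le> Mc"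
    using f by (simp_all add: F_class_def)
  then have "(RKHS_norm M phi lam f)\<^sup>2 \<le> Mc\<^sup>2"
    by (intro power_mono RKHS_norm_nonneg[OF lam])
  moreover have "0 \<le> \<Delta> / (2 * Mc\<^sup>2)"
    using assms(3,4) real_sqrt_ge_0_iff order_trans by blast
  moreover have "\<rho>\<^sup>2 \<le> (sqrt (\<Delta> / (2 * Mc\<^sup>2)))\<^sup>2"
    by (rule power_mono[OF assms(4,3)])
  ultimately have "\<rho>\<^sup>2 * (RKHS_norm M phi lam f)\<^sup>2 \<le> \<Delta> / (2 * Mc\<^sup>2) * Mc\<^sup>2"
    by (intro mult_mono) simp_all
  then show ?thesis
    using shrinkage_loss_le_RKHS_norm[OF lam f_RKHS, of \<rho>] \<open>Mc > 0\<close> by simp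
qed

lemma approximation_radius:
  fixes Mc \<Delta> \<theta> :: real
  assumes "Mc > 0" "\<Delta> > 0" "\<theta> > 0"
  defines "R \<equiv> (2 * Mc) powr \<theta> * \<Delta> powr (-\<theta> / 2)"
  shows "Mc * R powr (-1 / \<theta>) = sqrt \<Delta> / 2"
    and "(2 * Mc) powr (-\<theta>) * \<Delta> powr ((1 + \<theta>) / 2) * R = sqrt \<Delta>"
proof -
  have "R powr (-1 / \<theta>) = (2 * Mc) powr (\<theta> * (-1 / \<theta>)) * \<Delta> powr ((-\<theta> / 2) * (-1 / \<theta>))"
    using assms by (simp add: R_def powr_mult powr_powr)
  also have "\<dots> = 1 / (2 * Mc) * sqrt \<Delta>"
    using assms by (simp add: powr_minus_divide powr_half_sqrt)
  finally show "Mc * R powr (-1 / \<theta>) = sqrt \<Delta> / 2"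
    using assms by simp
  have "(2 * Mc) powr (-\<theta>) * \<Delta> powr ((1 + \<theta>) / 2) * R
      = ((2 * Mc) powr (-\<theta>) * (2 * Mc) powr \<theta>) * (\<Delta> powr ((1 + \<theta>) / 2) * \<Delta> powr (-\<theta> / 2))"
    by (simp only: R_def mult_ac)
  also have "\<dots> = (2 * Mc) powr (-\<theta> + \<theta>) * \<Delta> powr ((1 + \<theta>) / 2 + -\<theta> / 2)"
    by (simp only: powr_add)
  also have "(1 + \<theta>) / 2 + -\<theta> / 2 = 1 / 2" by (simp add: field_simps)
  also have "(2 * Mc) powr (-\<theta> + \<theta>) * \<Delta> powr (1 / 2) = sqrt \<Delta>"
    using assms by (simp add: powr_half_sqrt)
  finally show "(2 * Mc) powr (-\<theta>) * \<Delta> powr ((1 + \<theta>) / 2) * R = sqrt \<Delta>" .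
qed

lemma shrinkage_loss_le_of_approximable:
  assumes ON: "orthonormal_system M phi" and lam: "\<And>k. lam k > 0"
    and f: "F_class M phi lam \<theta> Mc f" and "\<theta> > 0" "Mc > 0" "\<Delta> > 0"
    and "0 \<le> \<rho>" "\<rho> \<le> 1 / (2 * sqrt 2) * (2 * Mc) powr (-\<theta>) * \<Delta> powr ((1 + \<theta>) / 2)"
  shows "shrinkage_loss M phi lam \<rho> f \<le> 3 / 4 * \<Delta>"
proof -
  define R where "R = (2 * Mc) powr \<theta> * \<Delta> powr (-\<theta> / 2)"
  have "R > 0" using assms by (simp add: R_def)
  then obtain h where h: "in_RKHS M phi lam h" "RKHS_norm M phi lam h \<le> R"
    and h_approx: "L2_norm M (\<lambda>x. f x - h x) \<le> sqrt \<Delta> / 2"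
    using f \<open>\<theta> > 0\<close> approximation_radius(1)[OF \<open>Mc > 0\<close> \<open>\<Delta> > 0\<close> \<open>\<theta> > 0\<close>]
    by (auto simp: F_class_def R_def)
  have sq_int_f: "sq_int M f" and sq_int_h: "sq_int M h"
    using F_class_sq_int[OF f] h(1) by (simp_all add: in_RKHS_def)
  have "\<rho> * R \<le> 1 / (2 * sqrt 2) * ((2 * Mc) powr (-\<theta>) * \<Delta> powr ((1 + \<theta>) / 2) * R)"
    using mult_right_mono[OF assms(8) less_imp_le[OF \<open>R > 0\<close>]] by (simp add: mult.assoc)
  also have "\<dots> = sqrt \<Delta> / (2 * sqrt 2)"
    using approximation_radius(2)[OF \<open>Mc > 0\<close> \<open>\<Delta> > 0\<close> \<open>\<theta> > 0\<close>] by (simp add: R_def)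
  finally have "(\<rho> * R)\<^sup>2 \<le> \<Delta> / 8"
    using power_mono[of "\<rho> * R" _ 2] \<open>0 \<le> \<rho>\<close> \<open>R > 0\<close> \<open>\<Delta> > 0\<close>
    by (fastforce simp: power_divide power_mult_distrib)
  moreover have "(RKHS_norm M phi lam h)\<^sup>2 \<le> R\<^sup>2"
    using h by (intro power_mono RKHS_norm_nonneg[OF lam])
  then have "shrinkage_loss M phi lam \<rho> h \<le> (\<rho> * R)\<^sup>2"
    using shrinkage_loss_le_RKHS_norm[OF lam h(1), of \<rho>] mult_left_mono[of _ _ "\<rho>\<^sup>2"]
    by (fastforce simp: power_mult_distrib)
  moreover have "(L2_norm M (\<lambda>x. f x - h x))\<^sup>2 \<le> \<Delta> / 4"
    using power_mono[OF h_approx, of 2] \<open>\<Delta> > 0\<close> by (simp add: L2_norm_def power_divide)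
  then have "shrinkage_loss M phi lam \<rho> (\<lambda>x. f x - h x) \<le> \<Delta> / 4"
    using shrinkage_loss_le_L2_norm[where lam = lam and \<rho> = \<rho>, OF ON lam sq_int_diff[OF sq_int_f sq_int_h]]
    by linarith
  ultimately show ?thesis
    using shrinkage_loss_le_split[where lam = lam and \<rho> = \<rho>, OF ON lam sq_int_f sq_int_h] by linarith
qed

theorem mainTheorem9:
  fixes P0 P :: "'a measure" and phi :: "nat \<Rightarrow> 'a \<Rightarrow> real" and lam :: "nat \<Rightarrow> real"
    and Mc \<Delta> \<theta> \<rho> :: real
  assumes "prob_space P0"
    and "mean_zero_ONB P0 phi"
    and "\<forall>k. lam k > 0"
    and "\<forall>k. lam (Suc k) < lam k"
    and "Mc > 0" and "\<Delta> > 0" and "\<theta> \<ge> 0"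
    and "P_class P0 phi lam \<Delta> \<theta> Mc P"
  shows "(\<theta> = 0 \<and> 0 < \<rho> \<and> \<rho> \<le> sqrt (\<Delta> / (2 * Mc\<^sup>2)) \<longrightarrow>
            eta_sq phi lam \<rho> P \<ge> 1/2 * (L2_norm P0 (dens_dev P0 P))\<^sup>2 \<and>
            1/2 * (L2_norm P0 (dens_dev P0 P))\<^sup>2 \<ge> 1/2 * \<Delta>) \<and>
         (\<theta> > 0 \<and> 0 < \<rho> \<and>
            \<rho> \<le> 1 / (2 * sqrt 2) * (2 * Mc) powr (-\<theta>) * \<Delta> powr ((1 + \<theta>) / 2) \<longrightarrow>
            eta_sq phi lam \<rho> P \<ge> 1/4 * (L2_norm P0 (dens_dev P0 P))\<^sup>2 \<and>
            1/4 * (L2_norm P0 (dens_dev P0 P))\<^sup>2 \<ge> 1/4 * \<Delta>)"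
proof -
  define u where "u = dens_dev P0 P"
  have lam: "\<And>k. lam k > 0" using assms(3) by blast
  have ON: "orthonormal_system P0 phi" by (rule mean_zero_ONB_orthonormal_system[OF assms(2)])
  have P: "prob_space P" "sets P = sets P0" "absolutely_continuous P0 P"
    and u_class: "F_class P0 phi lam \<theta> Mc u" and \<Delta>_le: "\<Delta> \<le> (L2_norm P0 u)\<^sup>2"
    using assms(8) by (simp_all add: P_class_def u_def)
  have eta: "eta_sq phi lam \<rho> P = (L2_norm P0 u)\<^sup>2 - shrinkage_loss P0 phi lam \<rho> u"
    using eta_sq_eq_L2_norm_minus_shrinkage_loss[OF assms(1,2) lam P
        F_class_sq_int[OF u_class[unfolded u_def]]]
    unfolding u_def .
  have "shrinkage_loss P0 phi lam \<rho> u \<le> \<Delta> / 2"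
    if "\<theta> = 0" "0 < \<rho>" "\<rho> \<le> sqrt (\<Delta> / (2 * Mc\<^sup>2))"
    using shrinkage_loss_le_of_RKHS_ball[OF lam _ _ that(3) assms(5)] u_class that by simp
  moreover have "shrinkage_loss P0 phi lam \<rho> u \<le> 3 / 4 * \<Delta>"
    if "\<theta> > 0" "0 < \<rho>" "\<rho> \<le> 1 / (2 * sqrt 2) * (2 * Mc) powr (-\<theta>) * \<Delta> powr ((1 + \<theta>) / 2)"
    using shrinkage_loss_le_of_approximable[OF ON lam u_class that(1) assms(5,6) _ that(3)] that(2)
    by simp
  ultimately show ?thesis
    using eta \<Delta>_le unfolding u_def by auto
qed

end
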